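(* Let $\mathbb{M}$ be a Zariski-like structure, and suppose $a=(a_0,\dots,a_{n-1})$ and $b=(b_0,\dots,b_{n-1})$ are tuples from $\mathbb{M}$ such that $a\to b$ is a specialization, $a_0\neq a_1$ and $b_0=b_1$. Then there is some $c=(c_0,\dots,c_{n-1})$ such that $a\to c\to b$, $\mathrm{rk}(a\to c)\le1$ and $c_0=c_1$.
   Context: $\mathbb{M}$ is a quasiminimal pregeometry structure (countable language; pregeometry cl determined by quantifier-free types; infinite-dimensional; countable closures of finite sets; unique generic types over countable closed sets; $\aleph_0$-homogeneity over countable closed sets and $\emptyset$) viewed as a monster model. $\dim$ is w.r.t. bcl (= cl), $\mathrm{bcl}(A)$ being the set of elements with fewer than $|\mathbb{M}|$ images under $\mathrm{Aut}(\mathbb{M}/A)$; $A\downarrow_B C$ iff $\dim(a/BC)=\dim(a/B)$ for finite $a$ from $A$; a tuple is generic in a set if its dimension is maximal there; Galois type $t^g(b/A)$ is the orbit under $\mathrm{Aut}(\mathbb{M}/A)$; Galois definable over $A$ = invariant under $\mathrm{Aut}(\mathbb{M}/A)$. Given a collection $\mathcal{C}$ of subsets of the powers of $\mathbb{M}$, a map $a_i\mapsto b_i$ (written $a\to b$) is a specialization if for every $C\in\mathcal{C}$ and $a_{i_1},\dots,a_{i_k}$, $(a_{i_1},\dots,a_{i_k})\in C$ implies $(b_{i_1},\dots,b_{i_k})\in C$; $\mathrm{rk}(a\to b)=\dim(a)-\dim(b)$ for finite tuples. Strongly regular: isomorphisms (Galois-type preserving maps), specializations $a\to a'$ with $a$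 generic over $\emptyset$, and $aa'\to bb'$ with $a\downarrow a'$ and $a\to b$, $a'\to b'$ strongly regular. Strongly good: strongly regular ones, and $(a_1,a_2,a_3)\to(a_1',a_2',a_3')$ whenever $(a_1,a_2)\to(a_1',a_2')$ is strongly good, $a_1\to a_1'$ is an isomorphism and $a_3\in\mathrm{cl}(a_1)$. $\mathbb{M}$ is Zariski-like if there is a countable collection $\mathcal{C}$ of sets $C\subseteq\mathbb{M}^n$ (irreducible sets) with (specializations w.r.t. $\mathcal{C}$): (1) each $C$ Galois definable over $\emptyset$; (2) every tuple is generic in some $C\in\mathcal{C}$; (3) generic elements of $C$ have the same Galois type over $\emptyset$; (4) if $a\in C$ generic and $a\in D\in\mathcal{C}$ then $C\subseteq D$; (5) if $(a,b)\in C_1$ generic, $a$ generic in $C_2$, $(a',b')\in C_1$ then $a'\in C_2$; (6) closed under coordinate permutations; (7) if $a\to a'$ is strongly good of rank $\le1$, specializations $ab\to a'b'$, $ac\to a'c'$ amalgamate: some $b^*\downarrow_a c$ with $t^g(b^*/a)=t^g(b/a)$ and $ab^*c\to a'b'c'$; (8) if $(a_i)_{i\in I}$ is independent and indiscernible over $b$, $(a_i')$ indiscernible over $b'$, $a_ib\to a_i'b'$ for all $i$, and $b\to b'$ strongly good of rank $\le1$, then $(ba_i)_{i\in I}\to(b'a_i')_{i\in I}$ (indiscernible: every permutation extends to an automorphism fixing the base); (9) if $(a_i)_{i<\kappa}\to(b_i)_{i<\kappa}$, $a_0\ne a_1$, $b_0=b_1$, and $S\subseteq\mathcal{P}_{<\omega}(\kappa)$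 is unbounded and directed with $0,1\in X$ for all $X\in S$ and such that for $X\subseteq Y$ in $S$ and every $(c_i)_{i\in Y}$ with $c_0=c_1$, $(a_i)_Y\to(c_i)_Y\to(b_i)_Y$ and $\mathrm{rk}((a_i)_Y\to(c_i)_Y)\le1$ one has $\mathrm{rk}((a_i)_X\to(c_i)_X)\le1$, then there are $(c_i)_{i<\kappa}$ with $(a_i)\to(c_i)\to(b_i)$, $c_0=c_1$ and $\mathrm{rk}((a_i)_X\to(c_i)_X)\le1$ for all $X\in S$. *)

theory Defs
  imports Main "HOL-Library.Countable_Set"
begin

text \<open>
  The structure M is modelled on the universe UNIV of a type 'a.
  Its countable language is given as a nat-indexed family of relations
  Rel i :: 'a list => bool (relations of arbitrary finite arity);
  cl :: 'a set => 'a set is the pregeometry.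
\<close>

definition aut :: "(nat \<Rightarrow> 'a list \<Rightarrow> bool) \<Rightarrow> ('a \<Rightarrow> 'a) \<Rightarrow> bool" where
  "aut Rel \<sigma> \<longleftrightarrow> bij \<sigma> \<and> (\<forall>i xs. Rel i xs \<longleftrightarrow> Rel i (map \<sigma> xs))"

definition partial_iso :: "(nat \<Rightarrow> 'a list \<Rightarrow> bool) \<Rightarrow> 'a set \<Rightarrow> ('a \<Rightarrow> 'a) \<Rightarrow> bool" where
  "partial_iso Rel D g \<longleftrightarrow> inj_on g D \<and>
     (\<forall>i xs. set xs \<subseteq> D \<longrightarrow> (Rel i xs \<longleftrightarrow> Rel i (map g xs)))"

definition qftp_eq :: "(nat \<Rightarrow> 'a list \<Rightarrow> bool) \<Rightarrow> 'a list \<Rightarrow> 'a list \<Rightarrow> bool" where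
  "qftp_eq Rel xs ys \<longleftrightarrow> length xs = length ys \<and>
     (\<exists>g. partial_iso Rel (set xs) g \<and> map g xs = ys)"

definition gal_eq :: "(nat \<Rightarrow> 'a list \<Rightarrow> bool) \<Rightarrow> 'a set \<Rightarrow> 'a list \<Rightarrow> 'a list \<Rightarrow> bool" where
  "gal_eq Rel A xs ys \<longleftrightarrow> (\<exists>\<sigma>. aut Rel \<sigma> \<and> (\<forall>z\<in>A. \<sigma> z = z) \<and> map \<sigma> xs = ys)"

text \<open>bcl(A): elements with fewer than |M| images under Aut(M/A)
  (i.e. there is no injection of M into the orbit).\<close>
definition bcl :: "(nat \<Rightarrow> 'a list \<Rightarrow> bool) \<Rightarrow> 'a set \<Rightarrow> 'a set" where
  "bcl Rel A = {x. \<not> (\<exists>f :: 'a \<Rightarrow> 'a. inj f \<and>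
      range f \<subseteq> {\<sigma> x | \<sigma>. aut Rel \<sigma> \<and> (\<forall>z\<in>A. \<sigma> z = z)})}"

definition pregeometry :: "('a set \<Rightarrow> 'a set) \<Rightarrow> bool" where
  "pregeometry cl \<longleftrightarrow>
     (\<forall>A. A \<subseteq> cl A) \<and>
     (\<forall>A B. A \<subseteq> B \<longrightarrow> cl A \<subseteq> cl B) \<and>
     (\<forall>A. cl (cl A) = cl A) \<and>
     (\<forall>A x. x \<in> cl A \<longrightarrow> (\<exists>F. F \<subseteq> A \<and> finite F \<and> x \<in> cl F)) \<and>
     (\<forall>A x y. x \<in> cl (insert y A) - cl A \<longrightarrow> y \<in> cl (insert x A))"

definition quasiminimal_pregeometry_structure ::
  "(nat \<Rightarrow> 'a list \<Rightarrow> bool) \<Rightarrow> ('a set \<Rightarrow> 'a set) \<Rightarrow> bool" where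
  "quasiminimal_pregeometry_structure Rel cl \<longleftrightarrow>
     pregeometry cl \<and>
     \<comment> \<open>cl is determined by quantifier-free types\<close>
     (\<forall>a a' x x'. qftp_eq Rel (x # a) (x' # a') \<longrightarrow>
        (x \<in> cl (set a) \<longleftrightarrow> x' \<in> cl (set a'))) \<and>
     \<comment> \<open>infinite dimension\<close>
     (\<not> (\<exists>X. finite X \<and> cl X = UNIV)) \<and>
     \<comment> \<open>countable closures of finite sets\<close>
     (\<forall>A. finite A \<longrightarrow> countable (cl A)) \<and>
     \<comment> \<open>uniqueness of generic types over countable closed sets\<close>
     (\<forall>H g x x'. countable H \<and> cl H = H \<and> cl (g ` H) = g ` H \<and>
        partial_iso Rel H g \<and> x \<notin> H \<and> x' \<notin> g ` H \<longrightarrow>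
        partial_iso Rel (insert x H) (g(x := x'))) \<and>
     \<comment> \<open>aleph0-homogeneity over countable closed sets and over the empty set\<close>
     (\<forall>H g b x. countable H \<and> (cl H = H \<or> H = {}) \<and> (cl (g ` H) = g ` H \<or> H = {}) \<and>
        partial_iso Rel (H \<union> set b) g \<and> x \<in> cl (H \<union> set b) \<longrightarrow>
        (\<exists>g'. partial_iso Rel (insert x (H \<union> set b)) g' \<and>
              (\<forall>z \<in> H \<union> set b. g' z = g z)))"

text \<open>Monster-model convention: bcl = cl on small sets (|A| < |M|).\<close>
definition monster_bcl_eq_cl :: "(nat \<Rightarrow> 'a list \<Rightarrow> bool) \<Rightarrow> ('a set \<Rightarrow> 'a set) \<Rightarrow> bool" where
  "monster_bcl_eq_cl Rel cl \<longleftrightarrow>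
     (\<forall>A. \<not> (\<exists>f :: 'a \<Rightarrow> 'a. inj f \<and> range f \<subseteq> A) \<longrightarrow> bcl Rel A = cl A)"

definition dimS :: "('a set \<Rightarrow> 'a set) \<Rightarrow> 'a set \<Rightarrow> 'a set \<Rightarrow> nat" where
  "dimS cl A B = (LEAST k. \<exists>X. X \<subseteq> A \<and> finite X \<and> card X = k \<and> A \<subseteq> cl (X \<union> B))"

definition dimt :: "('a set \<Rightarrow> 'a set) \<Rightarrow> 'a list \<Rightarrow> 'a set \<Rightarrow> nat" where
  "dimt cl a B = dimS cl (set a) B"

abbreviation dim0 :: "('a set \<Rightarrow> 'a set) \<Rightarrow> 'a list \<Rightarrow> nat" where
  "dim0 cl a \<equiv> dimt cl a {}"

definition indep :: "('a set \<Rightarrow> 'a set) \<Rightarrow> 'a set \<Rightarrow> 'a set \<Rightarrow> 'a set \<Rightarrow> bool" where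
  "indep cl A B C \<longleftrightarrow> (\<forall>a. set a \<subseteq> A \<longrightarrow> dimt cl a (B \<union> C) = dimt cl a B)"

definition generic_in :: "('a set \<Rightarrow> 'a set) \<Rightarrow> 'a list set \<Rightarrow> 'a list \<Rightarrow> bool" where
  "generic_in cl C a \<longleftrightarrow> a \<in> C \<and> (\<forall>x\<in>C. dim0 cl x \<le> dim0 cl a)"

definition spec :: "'a list set set \<Rightarrow> 'j set \<Rightarrow> ('j \<Rightarrow> 'a) \<Rightarrow> ('j \<Rightarrow> 'a) \<Rightarrow> bool" where
  "spec CC I f g \<longleftrightarrow>
     (\<forall>D\<in>CC. \<forall>is. set is \<subseteq> I \<longrightarrow> map f is \<in> D \<longrightarrow> map g is \<in> D)"

definition spec_list :: "'a list set set \<Rightarrow> 'a list \<Rightarrow> 'a list \<Rightarrow> bool" where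
  "spec_list CC a b \<longleftrightarrow> length a = length b \<and> spec CC {..<length a} ((!) a) ((!) b)"

definition rk :: "('a set \<Rightarrow> 'a set) \<Rightarrow> 'a list \<Rightarrow> 'a list \<Rightarrow> int" where
  "rk cl a b = int (dim0 cl a) - int (dim0 cl b)"

definition rk_fam :: "('a set \<Rightarrow> 'a set) \<Rightarrow> 'j set \<Rightarrow> ('j \<Rightarrow> 'a) \<Rightarrow> ('j \<Rightarrow> 'a) \<Rightarrow> int" where
  "rk_fam cl X f g = int (dimS cl (f ` X) {}) - int (dimS cl (g ` X) {})"

inductive strongly_regular ::
  "(nat \<Rightarrow> 'a list \<Rightarrow> bool) \<Rightarrow> ('a set \<Rightarrow> 'a set) \<Rightarrow> 'a list set set \<Rightarrow> 'a list \<Rightarrow> 'a list \<Rightarrow> bool"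
  for Rel cl CC where
  sr_iso: "spec_list CC a b \<Longrightarrow> gal_eq Rel {} a b \<Longrightarrow> strongly_regular Rel cl CC a b"
| sr_generic: "spec_list CC a b \<Longrightarrow> dim0 cl a = length a \<Longrightarrow> strongly_regular Rel cl CC a b"
| sr_concat: "spec_list CC (a @ a') (b @ b') \<Longrightarrow> indep cl (set a) {} (set a') \<Longrightarrow>
    strongly_regular Rel cl CC a b \<Longrightarrow> strongly_regular Rel cl CC a' b' \<Longrightarrow>
    strongly_regular Rel cl CC (a @ a') (b @ b')"

inductive strongly_good ::
  "(nat \<Rightarrow> 'a list \<Rightarrow> bool) \<Rightarrow> ('a set \<Rightarrow> 'a set) \<Rightarrow> 'a list set set \<Rightarrow> 'a list \<Rightarrow> 'a list \<Rightarrow> bool"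
  for Rel cl CC where
  sg_reg: "strongly_regular Rel cl CC a b \<Longrightarrow> strongly_good Rel cl CC a b"
| sg_ext: "strongly_good Rel cl CC (a1 @ a2) (a1' @ a2') \<Longrightarrow> gal_eq Rel {} a1 a1' \<Longrightarrow>
    set a3 \<subseteq> cl (set a1) \<Longrightarrow> spec_list CC (a1 @ a2 @ a3) (a1' @ a2' @ a3') \<Longrightarrow>
    strongly_good Rel cl CC (a1 @ a2 @ a3) (a1' @ a2' @ a3')"

text \<open>Flattening of the family (b a_i)_{i in I} into one indexed tuple.\<close>
definition fam_index :: "'a list \<Rightarrow> 'i set \<Rightarrow> ('i \<Rightarrow> 'a list) \<Rightarrow> (nat + ('i \<times> nat)) set" where
  "fam_index b I A = Inl ` {..<length b} \<union> {Inr (i, j) | i j. i \<in> I \<and> j < length (A i)}"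

definition fam_val :: "'a list \<Rightarrow> ('i \<Rightarrow> 'a list) \<Rightarrow> nat + ('i \<times> nat) \<Rightarrow> 'a" where
  "fam_val b A k = (case k of Inl m \<Rightarrow> b ! m | Inr (i, j) \<Rightarrow> A i ! j)"

definition indiscernible ::
  "(nat \<Rightarrow> 'a list \<Rightarrow> bool) \<Rightarrow> 'i set \<Rightarrow> ('i \<Rightarrow> 'a list) \<Rightarrow> 'a list \<Rightarrow> bool" where
  "indiscernible Rel I A b \<longleftrightarrow>
     (\<forall>\<pi>. bij_betw \<pi> I I \<longrightarrow>
        (\<exists>\<sigma>. aut Rel \<sigma> \<and> (\<forall>z\<in>set b. \<sigma> z = z) \<and> (\<forall>i\<in>I. map \<sigma> (A i) = A (\<pi> i))))"

definition indep_family ::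
  "('a set \<Rightarrow> 'a set) \<Rightarrow> 'i set \<Rightarrow> ('i \<Rightarrow> 'a list) \<Rightarrow> 'a list \<Rightarrow> bool" where
  "indep_family cl I A b \<longleftrightarrow>
     (\<forall>i\<in>I. indep cl (set (A i)) (set b) (\<Union>j\<in>I - {i}. set (A j)))"

definition zariski_like ::
  "(nat \<Rightarrow> 'a list \<Rightarrow> bool) \<Rightarrow> ('a set \<Rightarrow> 'a set) \<Rightarrow> 'a list set set \<Rightarrow> bool" where
  "zariski_like Rel cl CC \<longleftrightarrow>
     quasiminimal_pregeometry_structure Rel cl \<and> monster_bcl_eq_cl Rel cl \<and>
     countable CC \<and>
     (\<forall>C\<in>CC. \<exists>n. \<forall>x\<in>C. length x = n) \<and>
     \<comment> \<open>(1)\<close>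
     (\<forall>C\<in>CC. \<forall>\<sigma> x. aut Rel \<sigma> \<longrightarrow> (x \<in> C \<longleftrightarrow> map \<sigma> x \<in> C)) \<and>
     \<comment> \<open>(2)\<close>
     (\<forall>a. \<exists>C\<in>CC. generic_in cl C a) \<and>
     \<comment> \<open>(3)\<close>
     (\<forall>C\<in>CC. \<forall>a a'. generic_in cl C a \<and> generic_in cl C a' \<longrightarrow> gal_eq Rel {} a a') \<and>
     \<comment> \<open>(4)\<close>
     (\<forall>C\<in>CC. \<forall>D\<in>CC. \<forall>a. generic_in cl C a \<and> a \<in> D \<longrightarrow> C \<subseteq> D) \<and>
     \<comment> \<open>(5)\<close>
     (\<forall>C1\<in>CC. \<forall>C2\<in>CC. \<forall>a b a' b'.
        generic_in cl C1 (a @ b) \<and> generic_in cl C2 a \<and> a' @ b' \<in> C1 \<and> length a' = length a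
        \<longrightarrow> a' \<in> C2) \<and>
     \<comment> \<open>(6)\<close>
     (\<forall>C\<in>CC. \<forall>n p. (\<forall>x\<in>C. length x = n) \<and> bij_betw p {..<n} {..<n} \<longrightarrow>
        (\<lambda>x. map (\<lambda>i. x ! p i) [0..<n]) ` C \<in> CC) \<and>
     \<comment> \<open>(7)\<close>
     (\<forall>a a' b b' c c'.
        strongly_good Rel cl CC a a' \<and> rk cl a a' \<le> 1 \<and>
        spec_list CC (a @ b) (a' @ b') \<and> length b = length b' \<and>
        spec_list CC (a @ c) (a' @ c') \<and> length c = length c' \<longrightarrow>
        (\<exists>bs. indep cl (set bs) (set a) (set c) \<and> gal_eq Rel (set a) b bs \<and>
              spec_list CC (a @ bs @ c) (a' @ b' @ c'))) \<and>
     \<comment> \<open>(8)\<close>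
     (\<forall>(I :: 'a set) A A' b b'.
        indep_family cl I A b \<and> indiscernible Rel I A b \<and> indiscernible Rel I A' b' \<and>
        (\<forall>i\<in>I. spec_list CC (A i @ b) (A' i @ b') \<and> length (A i) = length (A' i)) \<and>
        strongly_good Rel cl CC b b' \<and> rk cl b b' \<le> 1 \<longrightarrow>
        spec CC (fam_index b I A) (fam_val b A) (fam_val b' A')) \<and>
     \<comment> \<open>(9)\<close>
     (\<forall>(I :: 'a set) i0 i1 (f :: 'a \<Rightarrow> 'a) g S.
        i0 \<in> I \<and> i1 \<in> I \<and> spec CC I f g \<and> f i0 \<noteq> f i1 \<and> g i0 = g i1 \<and>
        S \<subseteq> {X. X \<subseteq> I \<and> finite X} \<and>
        (\<forall>X. X \<subseteq> I \<and> finite X \<longrightarrow> (\<exists>Y\<in>S. X \<subseteq> Y)) \<and>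
        (\<forall>X\<in>S. \<forall>Y\<in>S. \<exists>Z\<in>S. X \<union> Y \<subseteq> Z) \<and>
        (\<forall>X\<in>S. i0 \<in> X \<and> i1 \<in> X) \<and>
        (\<forall>X\<in>S. \<forall>Y\<in>S. X \<subseteq> Y \<longrightarrow>
           (\<forall>h. h i0 = h i1 \<and> spec CC Y f h \<and> spec CC Y h g \<and> rk_fam cl Y f h \<le> 1
                \<longrightarrow> rk_fam cl X f h \<le> 1))
        \<longrightarrow> (\<exists>h. spec CC I f h \<and> spec CC I h g \<and> h i0 = h i1 \<and>
                 (\<forall>X\<in>S. rk_fam cl X f h \<le> 1)))"

end

theory Submission
  imports Defs
begin

text \<open>
  Axiom (9) is a compactness principle for specializations of families indexed by subsets
  of M. For a finite index set I and S = {I} its hypotheses on S hold trivially, and its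
  conclusion is literally the required intermediate specialization; since M is infinite,
  the n coordinates of the tuples can be indexed by n distinct elements of M.
\<close>

lemma zariski_like_infinite_universe:
  fixes Rel :: "nat \<Rightarrow> 'a list \<Rightarrow> bool"
  assumes "zariski_like Rel cl CC"
  shows "infinite (UNIV :: 'a set)"
proof
  assume "finite (UNIV :: 'a set)"
  have qm: "quasiminimal_pregeometry_structure Rel cl"
    using assms unfolding zariski_like_def by (elim conjE)
  then have "pregeometry cl"
    unfolding quasiminimal_pregeometry_structure_def by (elim conjE)
  have no_finite_basis: "\<not> (\<exists>X. finite X \<and> cl X = UNIV)"
    using qm unfolding quasiminimal_pregeometry_structure_def by (elim conjE)
  from \<open>pregeometry cl\<close> have "\<forall>A. A \<subseteq> cl A"
    unfolding pregeometry_def by (rule conjunct1)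
  then have "cl (UNIV :: 'a set) = UNIV"
    by blast
  with \<open>finite UNIV\<close> no_finite_basis show False
    by blast
qed

lemma set_subset_image_obtain_map:
  assumes "set js \<subseteq> e ` J"
  obtains ks where "set ks \<subseteq> J" and "js = map e ks"
proof -
  have "js \<in> lists (e ` J)"
    using assms by (simp add: lists_eq_set)
  then obtain ks where "ks \<in> lists J" and "js = map e ks"
    by (auto simp: lists_image)
  then show ?thesis
    using that by (simp add: lists_eq_set)
qed

lemma spec_image_iff: "spec CC (e ` J) f g \<longleftrightarrow> spec CC J (f \<circ> e) (g \<circ> e)"
  unfolding spec_def
proof (intro iffI ballI allI impI)
  fix D ks
  assume spec_image: "\<forall>D\<in>CC. \<forall>js. set js \<subseteq> e ` J \<longrightarrow> map f js \<in> D \<longrightarrow> map g js \<in> D"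
    and "D \<in> CC" "set ks \<subseteq> J" "map (f \<circ> e) ks \<in> D"
  have "set (map e ks) \<subseteq> e ` J"
    using \<open>set ks \<subseteq> J\<close> by auto
  then show "map (g \<circ> e) ks \<in> D"
    using spec_image[rule_format, of D "map e ks"] \<open>D \<in> CC\<close> \<open>map (f \<circ> e) ks \<in> D\<close> by simp
next
  fix D js
  assume "\<forall>D\<in>CC. \<forall>ks. set ks \<subseteq> J \<longrightarrow> map (f \<circ> e) ks \<in> D \<longrightarrow> map (g \<circ> e) ks \<in> D"
    and "D \<in> CC" "set js \<subseteq> e ` J" "map f js \<in> D"
  moreover obtain ks where "set ks \<subseteq> J" and "js = map e ks"
    using set_subset_image_obtain_map[OF \<open>set js \<subseteq> e ` J\<close>] .
  ultimately show "map g js \<in> D"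
    by simp
qed

lemma spec_cong:
  assumes "\<And>i. i \<in> I \<Longrightarrow> f i = f' i" and "\<And>i. i \<in> I \<Longrightarrow> g i = g' i"
  shows "spec CC I f g \<longleftrightarrow> spec CC I f' g'"
proof -
  have map_eqs: "map f is = map f' is" "map g is = map g' is" if "set is \<subseteq> I" for "is"
    using that assms by (auto intro!: map_cong)
  show ?thesis
    unfolding spec_def by (simp add: map_eqs cong: imp_cong)
qed

lemma zariski_like_rank_one_specialization:
  fixes f g :: "'a \<Rightarrow> 'a" and Rel :: "nat \<Rightarrow> 'a list \<Rightarrow> bool"
  assumes "zariski_like Rel cl CC" and "finite I" and "i0 \<in> I" "i1 \<in> I"
    and "spec CC I f g" and "f i0 \<noteq> f i1" and "g i0 = g i1"
  obtains h where "spec CC I f h" "spec CC I h g" "h i0 = h i1" "rk_fam cl I f h \<le> 1"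
proof -
  have "\<exists>h. spec CC I f h \<and> spec CC I h g \<and> h i0 = h i1 \<and> (\<forall>X\<in>{I}. rk_fam cl X f h \<le> 1)"
    using assms(1) unfolding zariski_like_def
    apply (elim conjE)
    apply (rotate_tac -1) \<comment> \<open>axiom (9) is the last conjunct\<close>
    apply (drule spec[of _ I], drule spec[of _ i0], drule spec[of _ i1],
           drule spec[of _ f], drule spec[of _ g], drule spec[of _ "{I}"])
    by (erule mp) (simp (no_asm) add: assms(2-))
  then show ?thesis
    using that by auto
qed

lemma rk_fam_image: "rk_fam cl (e ` J) f g = rk_fam cl J (f \<circ> e) (g \<circ> e)"
  by (simp add: rk_fam_def image_comp)

lemma rk_fam_cong:
  assumes "\<And>i. i \<in> I \<Longrightarrow> f i = f' i" and "\<And>i. i \<in> I \<Longrightarrow> g i = g' i"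
  shows "rk_fam cl I f g = rk_fam cl I f' g'"
  using assms by (simp add: rk_fam_def cong: image_cong)

lemma rk_eq_rk_fam_nth:
  assumes "length c = length a"
  shows "rk cl a c = rk_fam cl {..<length a} ((!) a) ((!) c)"
  using assms by (simp add: rk_def rk_fam_def dimt_def lessThan_atLeast0 nth_image)

lemma zariski_like_finite_rank_one_specialization:
  fixes f g :: "'j \<Rightarrow> 'a" and Rel :: "nat \<Rightarrow> 'a list \<Rightarrow> bool"
  assumes "zariski_like Rel cl CC" and "finite J" and "i0 \<in> J" "i1 \<in> J"
    and "spec CC J f g" and "f i0 \<noteq> f i1" and "g i0 = g i1"
  obtains h where "spec CC J f h" "spec CC J h g" "h i0 = h i1" "rk_fam cl J f h \<le> 1"
proof -
  obtain to_nat :: "'j \<Rightarrow> nat" where "inj_on to_nat J"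
    using \<open>finite J\<close> countable_finite countable_def by blast
  moreover obtain from_nat :: "nat \<Rightarrow> 'a" where "inj from_nat"
    using zariski_like_infinite_universe[OF assms(1)] infinite_countable_subset by blast
  ultimately obtain e :: "'j \<Rightarrow> 'a" where "inj_on e J"
    using comp_inj_on inj_on_subset subset_UNIV by metis
  define f' where "f' = f \<circ> inv_into J e"
  define g' where "g' = g \<circ> inv_into J e"
  have f'e: "(f' \<circ> e) i = f i" and g'e: "(g' \<circ> e) i = g i" if "i \<in> J" for i
    using \<open>inj_on e J\<close> that by (simp_all add: f'_def g'_def)
  have "spec CC (e ` J) f' g'"
    using assms(5) spec_cong[of J "f' \<circ> e" f "g' \<circ> e" g] f'e g'e by (simp add: spec_image_iff)
  moreover have "f' (e i0) \<noteq> f' (e i1)" and "g' (e i0) = g' (e i1)"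
    using assms(3,4,6,7) f'e g'e by auto
  ultimately obtain h' where h': "spec CC (e ` J) f' h'" "spec CC (e ` J) h' g'"
    "h' (e i0) = h' (e i1)" "rk_fam cl (e ` J) f' h' \<le> 1"
    using zariski_like_rank_one_specialization[OF assms(1), of "e ` J" "e i0" "e i1" f' g'] assms(2-4)
    by blast
  show ?thesis
  proof
    show "spec CC J f (h' \<circ> e)" and "spec CC J (h' \<circ> e) g"
      using h'(1,2) spec_cong[of J "f' \<circ> e" f "h' \<circ> e" "h' \<circ> e"]
        spec_cong[of J "h' \<circ> e" "h' \<circ> e" "g' \<circ> e" g] f'e g'e
      by (simp_all add: spec_image_iff)
    show "(h' \<circ> e) i0 = (h' \<circ> e) i1"
      using h'(3) by simp
    show "rk_fam cl J f (h' \<circ> e) \<le> 1"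
      using h'(4) rk_fam_cong[of J "f' \<circ> e" f "h' \<circ> e" "h' \<circ> e"] f'e
      by (simp add: rk_fam_image)
  qed
qed

theorem lemma5p8:
  fixes Rel :: "nat \<Rightarrow> 'a list \<Rightarrow> bool" and cl :: "'a set \<Rightarrow> 'a set"
    and CC :: "'a list set set" and a b :: "'a list"
  assumes "zariski_like Rel cl CC"
    and "spec_list CC a b"
    and "1 < length a"
    and "a ! 0 \<noteq> a ! 1"
    and "b ! 0 = b ! 1"
  shows "\<exists>c. spec_list CC a c \<and> spec_list CC c b \<and> rk cl a c \<le> 1 \<and> c ! 0 = c ! 1"
proof -
  define n where "n = length a"
  have indices: "0 \<in> {..<n}" "1 \<in> {..<n}"
    using assms(3) by (auto simp: n_def)
  have "length b = n" and spec_ab: "spec CC {..<n} ((!) a) ((!) b)"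
    using assms(2) by (auto simp: n_def spec_list_def)
  obtain h where h: "spec CC {..<n} ((!) a) h" "spec CC {..<n} h ((!) b)" "h 0 = h 1"
      "rk_fam cl {..<n} ((!) a) h \<le> 1"
    by (rule zariski_like_finite_rank_one_specialization[OF assms(1) finite_lessThan indices spec_ab assms(4,5)])
  define c where "c = map h [0..<n]"
  have hc: "h i = c ! i" if "i \<in> {..<n}" for i
    using that by (simp add: c_def)
  have "length c = length a"
    by (simp add: c_def n_def)
  moreover have "spec CC {..<n} ((!) a) ((!) c)" and "spec CC {..<n} ((!) c) ((!) b)"
    using h(1,2) spec_cong[of "{..<n}" "(!) a" "(!) a" h "(!) c"]
      spec_cong[of "{..<n}" h "(!) c" "(!) b" "(!) b"] hc by simp_all
  moreover have "rk_fam cl {..<n} ((!) a) ((!) c) \<le> 1"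
    using h(4) rk_fam_cong[of "{..<n}" "(!) a" "(!) a" h "(!) c"] hc by simp
  moreover have "c ! 0 = c ! 1"
    using h(3) hc indices by metis
  ultimately show ?thesis
    using \<open>length b = n\<close> rk_eq_rk_fam_nth[of c a cl]
    by (intro exI[of _ c]) (simp add: spec_list_def n_def)
qed

end
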